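(* Let $C$ be an open cone containing no lines, with basepoint $b\in C$. Every horofunction $h$ of the Hilbert geometry on $C$ can be written as $h=r_{C,x}+q$ with $x\in\partial C\setminus\{0\}$ and $q\in A_C(x)$, and this decomposition is unique in the following sense: if $h=r_{C,x}+q_x=r_{C,y}+q_y$ with $x,y\in\partial C\setminus\{0\}$, $q_x\in A_C(x)$, $q_y\in A_C(y)$, then $y$ is a positive multiple of $x$, $r_{C,x}=r_{C,y}$ and $q_x=q_y$.
   Context: $V$ is a finite-dimensional real vector space. An open cone is a nonempty open convex set $T\subset V$ with $\lambda T\subseteq T$ for all $\lambda>0$ and $0\notin T$; $\partial T$ is its boundary. Write $x\le_C y$ iff $y-x\in\overline C$. $M_C(y/x):=\inf\{\lambda>0:y\le_C\lambda x\}$, $F_C(y,x):=\log M_C(y/x)$, $RF_C(x,y):=F_C(y,x)$, $H_C(x,y):=F_C(x,y)+F_C(y,x)$. For $p\in\partial C\setminus\{0\}$, $r_{C,p}(x):=RF_C(x,p)-RF_C(b,p)$. For $d\in\{F_C,H_C\}$: a sequence $(x_n)$ in $C$ converges in the $d$-sense to $g$ if $d(\cdot,x_n)-d(b,x_n)\to g$ pointwise on $C$; a horofunction of $d$ is such a limit not of the form $d(\cdot,p)-d(b,p)$, $p\in C$. $A_C(x)$ is the set of horofunctions of $F_C$ that are Funk-sense limits of sequences in $C$ converging to $x$ in the usual topology of $V$. *)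

theory Defs
  imports "HOL-Analysis.Analysis"
begin

definition open_cone :: "'a::euclidean_space set \<Rightarrow> bool" where
  "open_cone T \<longleftrightarrow> T \<noteq> {} \<and> open T \<and> convex T \<and>
     (\<forall>t>0. \<forall>x\<in>T. t *\<^sub>R x \<in> T) \<and> 0 \<notin> T"

definition contains_no_lines :: "'a::euclidean_space set \<Rightarrow> bool" where
  "contains_no_lines C \<longleftrightarrow> (\<forall>v. v \<in> closure C \<and> - v \<in> closure C \<longrightarrow> v = 0)"

definition cone_le :: "'a::euclidean_space set \<Rightarrow> 'a \<Rightarrow> 'a \<Rightarrow> bool" where
  "cone_le C x y \<longleftrightarrow> y - x \<in> closure C"

definition M_C :: "'a::euclidean_space set \<Rightarrow> 'a \<Rightarrow> 'a \<Rightarrow> real" where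
  "M_C C y x = Inf {t. t > 0 \<and> cone_le C y (t *\<^sub>R x)}"

definition F_C :: "'a::euclidean_space set \<Rightarrow> 'a \<Rightarrow> 'a \<Rightarrow> real" where
  "F_C C y x = ln (M_C C y x)"

definition RF_C :: "'a::euclidean_space set \<Rightarrow> 'a \<Rightarrow> 'a \<Rightarrow> real" where
  "RF_C C x y = F_C C y x"

definition H_C :: "'a::euclidean_space set \<Rightarrow> 'a \<Rightarrow> 'a \<Rightarrow> real" where
  "H_C C x y = F_C C x y + F_C C y x"

definition r_C :: "'a::euclidean_space set \<Rightarrow> 'a \<Rightarrow> 'a \<Rightarrow> 'a \<Rightarrow> real" where
  "r_C C b p x = RF_C C x p - RF_C C b p"

definition d_converges :: "('a \<Rightarrow> 'a \<Rightarrow> real) \<Rightarrow> 'a set \<Rightarrow> 'a \<Rightarrow> (nat \<Rightarrow> 'a) \<Rightarrow> ('a \<Rightarrow> real) \<Rightarrow> bool" where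
  "d_converges d C b xs g \<longleftrightarrow> (\<forall>n. xs n \<in> C) \<and>
     (\<forall>z\<in>C. (\<lambda>n. d z (xs n) - d b (xs n)) \<longlonglongrightarrow> g z)"

definition horofunction :: "('a \<Rightarrow> 'a \<Rightarrow> real) \<Rightarrow> 'a set \<Rightarrow> 'a \<Rightarrow> ('a \<Rightarrow> real) \<Rightarrow> bool" where
  "horofunction d C b g \<longleftrightarrow> (\<exists>xs. d_converges d C b xs g) \<and>
     \<not> (\<exists>p\<in>C. \<forall>z\<in>C. g z = d z p - d b p)"

definition A_C :: "'a::euclidean_space set \<Rightarrow> 'a \<Rightarrow> 'a \<Rightarrow> ('a \<Rightarrow> real) set" where
  "A_C C b x = {q. horofunction (F_C C) C b q \<and>
      (\<exists>xs. d_converges (F_C C) C b xs q \<and> xs \<longlonglongrightarrow> x)}"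

end

theory Submission
  imports Defs
begin

(* The Hilbert metric is the symmetrisation H(z,w) = F(z,w) + F(w,z) of the Funk metric and is
   invariant under rescaling either argument. Normalise a sequence defining a Hilbert horofunction h
   to the unit sphere and pass to a convergent subsequence with limit x; x lies in the frontier,
   since otherwise h would be an internal function. The reverse-Funk half of H converges to r_x
   because w \<mapsto> F(w,z) is continuous on the closure of C minus 0, so the Funk half converges to
   q = h - r_x. This q is a Funk horofunction: Funk limits along sequences tending to x decrease in
   the direction of x, q(z + s x) \<le> q(z), whereas F(z + s x, p) is unbounded in s.
   For uniqueness, compare both decompositions at b + s x and let s \<rightarrow> \<infinity>: this gives
   M(y/b) x - M(x/b) y \<in> closure C, by symmetry also its negative, and since C contains no lines
   y is a positive multiple of x. *)

locale funk_geometry =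
  fixes C :: "'a::euclidean_space set"
  assumes open_cone: "open_cone C"
begin

lemma open_C: "open C" and convex_C: "convex C" and nonempty_C: "C \<noteq> {}"
  and zero_notin_C: "0 \<notin> C" and scaleR_in_C: "t > 0 \<Longrightarrow> x \<in> C \<Longrightarrow> t *\<^sub>R x \<in> C"
  using open_cone unfolding open_cone_def by auto

lemma frontier_C: "frontier C = closure C - C"
  using open_C by (simp add: frontier_def interior_open)

lemma zero_in_closure_C: "0 \<in> closure C"
proof -
  obtain c where c: "c \<in> C" using nonempty_C by blast
  have "((\<lambda>t. t *\<^sub>R c) \<longlongrightarrow> 0 *\<^sub>R c) (at_right 0)"
    by (intro tendsto_intros)
  moreover have "\<forall>\<^sub>F t in at_right 0. t *\<^sub>R c \<in> closure C"
    using eventually_at_right_less[of 0] by eventually_elim (use c scaleR_in_C closure_subset in auto)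
  ultimately show ?thesis
    using Lim_in_closed_set[OF closed_closure _ trivial_limit_at_right_real] by auto
qed

lemma convex_cone_closure_C: "convex_cone (closure C)"
  unfolding convex_cone_def conic_def
proof (intro conjI allI impI)
  fix x and t :: real assume x: "x \<in> closure C" and t: "0 \<le> t"
  show "t *\<^sub>R x \<in> closure C"
  proof (cases "t = 0")
    case False
    have "(*\<^sub>R) t ` C \<subseteq> C" using scaleR_in_C t False by auto
    hence "closure ((*\<^sub>R) t ` C) \<subseteq> closure C" by (rule closure_mono)
    thus ?thesis using x by (auto simp: closure_scaleR[symmetric])
  qed (simp add: zero_in_closure_C)
qed (use nonempty_C convex_C in auto)

lemmas add_in_closure_C = convex_cone_add[OF convex_cone_closure_C]
  and scaleR_in_closure_C = convex_cone_scaleR[OF convex_cone_closure_C]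

lemma add_closure_in_C: assumes "z \<in> C" "k \<in> closure C" shows "z + k \<in> C"
proof -
  have "2 *\<^sub>R k - (1/2) *\<^sub>R (2 *\<^sub>R k - 2 *\<^sub>R z) \<in> interior C"
    using assms scaleR_in_C scaleR_in_closure_C open_C
    by (intro mem_interior_closure_convex_shrink convex_C) (auto simp: interior_open)
  moreover have "2 *\<^sub>R k - (1/2) *\<^sub>R (2 *\<^sub>R k - 2 *\<^sub>R z) = z + k"
    by (simp add: scaleR_right_diff_distrib scaleR_2)
  ultimately show ?thesis using open_C by (simp add: interior_open)
qed

lemma dominated_by_interior_point:
  assumes "cball z r \<subseteq> C" "0 < r"
  shows "(norm u / r) *\<^sub>R z - u \<in> closure C"
proof (cases "u = 0")
  case False
  have "z - (r / norm u) *\<^sub>R u \<in> cball z r"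
    using False assms(2) by (simp add: dist_norm)
  hence "(norm u / r) *\<^sub>R (z - (r / norm u) *\<^sub>R u) \<in> C"
    using assms False by (intro scaleR_in_C) auto
  thus ?thesis
    using False assms(2) closure_subset by (auto simp: scaleR_right_diff_distrib)
qed (simp add: zero_in_closure_C)

lemma M_C_eq_Inf: "M_C C v w = Inf {t. 0 < t \<and> t *\<^sub>R w - v \<in> closure C}"
  unfolding M_C_def cone_le_def ..

lemma M_C_set_nonempty:
  assumes "w \<in> C" shows "{t. 0 < t \<and> t *\<^sub>R w - v \<in> closure C} \<noteq> {}"
proof -
  obtain r where r: "0 < r" "cball w r \<subseteq> C"
    using assms open_C open_contains_cball by blast
  have "w + ((norm v / r) *\<^sub>R w - v) \<in> C"
    using assms dominated_by_interior_point[OF r(2,1)] by (rule add_closure_in_C)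
  hence "(norm v / r + 1) *\<^sub>R w - v \<in> closure C"
    using closure_subset by (auto simp: algebra_simps)
  moreover have "0 < norm v / r + 1"
    using r(1) by (simp add: add_nonneg_pos)
  ultimately show ?thesis by blast
qed

lemma M_C_nonneg: "w \<in> C \<Longrightarrow> 0 \<le> M_C C v w"
  unfolding M_C_eq_Inf by (rule cInf_greatest) (auto dest: M_C_set_nonempty)

lemma M_C_le_iff:
  assumes w: "w \<in> C" and t: "0 \<le> t"
  shows "M_C C v w \<le> t \<longleftrightarrow> t *\<^sub>R w - v \<in> closure C"
proof
  let ?S = "{t. 0 < t \<and> t *\<^sub>R w - v \<in> closure C}"
  have bdd: "bdd_below ?S" by (rule bdd_belowI[of _ 0]) auto
  have shift: "s *\<^sub>R w - v \<in> closure C" if "u *\<^sub>R w - v \<in> closure C" "u \<le> s" for u s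
  proof -
    have "(u *\<^sub>R w - v) + (s - u) *\<^sub>R w \<in> closure C"
      using that w closure_subset by (intro add_in_closure_C scaleR_in_closure_C) auto
    thus ?thesis by (simp add: algebra_simps)
  qed
  show "M_C C v w \<le> t" if "t *\<^sub>R w - v \<in> closure C"
  proof (rule dense_ge)
    fix s assume "t < s"
    thus "M_C C v w \<le> s"
      unfolding M_C_eq_Inf using t shift[OF that] by (intro cInf_lower[OF _ bdd]) auto
  qed
  assume le: "M_C C v w \<le> t"
  have "\<forall>\<^sub>F s in at_right 0. (t + s) *\<^sub>R w - v \<in> closure C"
    using eventually_at_right_less[of 0]
  proof eventually_elim
    case (elim s)
    hence "Inf ?S < t + s" using le unfolding M_C_eq_Inf by linarith
    then obtain u where "u \<in> ?S" "u < t + s"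
      using cInf_less_iff[OF M_C_set_nonempty[OF w] bdd] by blast
    thus ?case using shift by auto
  qed
  moreover have "((\<lambda>s. (t + s) *\<^sub>R w - v) \<longlongrightarrow> (t + 0) *\<^sub>R w - v) (at_right 0)"
    by (intro tendsto_intros)
  ultimately show "t *\<^sub>R w - v \<in> closure C"
    using Lim_in_closed_set[OF closed_closure _ trivial_limit_at_right_real] by auto
qed

lemma M_C_attained: "w \<in> C \<Longrightarrow> M_C C v w *\<^sub>R w - v \<in> closure C"
  using M_C_le_iff M_C_nonneg by blast

lemma M_C_le_self: "w \<in> C \<Longrightarrow> M_C C w w \<le> 1"
  by (simp add: M_C_le_iff zero_in_closure_C)

lemma M_C_mono:
  assumes "w \<in> C" "v' - v \<in> closure C"
  shows "M_C C v w \<le> M_C C v' w"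
proof -
  have "(M_C C v' w *\<^sub>R w - v') + (v' - v) \<in> closure C"
    using assms M_C_attained by (intro add_in_closure_C) auto
  thus ?thesis using assms M_C_nonneg M_C_le_iff by simp
qed

lemma M_C_add_le:
  assumes "w \<in> C"
  shows "M_C C (v1 + v2) w \<le> M_C C v1 w + M_C C v2 w"
proof -
  have "(M_C C v1 w *\<^sub>R w - v1) + (M_C C v2 w *\<^sub>R w - v2) \<in> closure C"
    using assms M_C_attained by (intro add_in_closure_C) auto
  thus ?thesis using assms M_C_nonneg M_C_le_iff by (simp add: algebra_simps)
qed

lemma M_C_scaleR_left_le:
  assumes "w \<in> C" "0 \<le> c"
  shows "M_C C (c *\<^sub>R v) w \<le> c * M_C C v w"
proof -
  have "c *\<^sub>R (M_C C v w *\<^sub>R w - v) \<in> closure C"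
    using assms M_C_attained by (intro scaleR_in_closure_C) auto
  thus ?thesis using assms M_C_nonneg M_C_le_iff by (simp add: algebra_simps)
qed

lemma M_C_scaleR_left:
  assumes "w \<in> C" "0 < c"
  shows "M_C C (c *\<^sub>R v) w = c * M_C C v w"
proof -
  have "M_C C ((1/c) *\<^sub>R (c *\<^sub>R v)) w \<le> (1/c) * M_C C (c *\<^sub>R v) w"
    using assms by (intro M_C_scaleR_left_le) auto
  thus ?thesis using M_C_scaleR_left_le[of w c v] assms by (simp add: field_simps)
qed

lemma M_C_antimono_right:
  assumes "w \<in> C" "w' - w \<in> closure C"
  shows "M_C C v w' \<le> M_C C v w"
proof -
  have w': "w' \<in> C" using add_closure_in_C[OF assms] by simp
  have "(M_C C v w *\<^sub>R w - v) + M_C C v w *\<^sub>R (w' - w) \<in> closure C"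
    using assms M_C_attained M_C_nonneg by (intro add_in_closure_C scaleR_in_closure_C) auto
  thus ?thesis using w' assms M_C_nonneg M_C_le_iff by (simp add: algebra_simps)
qed

lemma M_C_scaleR_right:
  assumes "w \<in> C" "0 < c"
  shows "M_C C v (c *\<^sub>R w) = M_C C v w / c"
proof (rule antisym)
  have cw: "c *\<^sub>R w \<in> C" using assms by (intro scaleR_in_C)
  have "(M_C C v w / c) *\<^sub>R (c *\<^sub>R w) - v \<in> closure C"
    using assms M_C_attained by simp
  thus "M_C C v (c *\<^sub>R w) \<le> M_C C v w / c"
    using cw assms M_C_nonneg M_C_le_iff by simp
  have "(c * M_C C v (c *\<^sub>R w)) *\<^sub>R w - v \<in> closure C"
    using M_C_attained[OF cw, of v] by (simp add: mult.commute)
  hence "M_C C v w \<le> c * M_C C v (c *\<^sub>R w)"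
    using cw assms M_C_nonneg M_C_le_iff by simp
  thus "M_C C v w / c \<le> M_C C v (c *\<^sub>R w)"
    using assms(2) by (simp add: divide_le_eq mult.commute)
qed

lemma M_C_le_norm:
  assumes "cball w r \<subseteq> C" "0 < r"
  shows "M_C C u w \<le> norm u / r"
proof -
  have "w \<in> C" using assms by auto
  thus ?thesis using assms dominated_by_interior_point[OF assms] M_C_le_iff by simp
qed

lemma lipschitz_M_C_left:
  assumes "cball w r \<subseteq> C" "0 < r"
  shows "(1 / r)-lipschitz_on UNIV (\<lambda>v. M_C C v w)"
proof (rule lipschitz_onI)
  have w: "w \<in> C" using assms by auto
  have le: "M_C C v w \<le> M_C C v' w + norm (v - v') / r" for v v'
    using M_C_add_le[OF w, of v' "v - v'"] M_C_le_norm[OF assms, of "v - v'"] by simp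
  show "dist (M_C C v w) (M_C C v' w) \<le> 1 / r * dist v v'" for v v'
    using le[of v v'] le[of v' v] norm_minus_commute[of v' v]
    by (simp add: dist_real_def dist_norm abs_le_iff)
qed (use assms(2) in simp)

lemma continuous_on_M_C_left: "w \<in> C \<Longrightarrow> continuous_on UNIV (\<lambda>v. M_C C v w)"
  using open_C open_contains_cball lipschitz_M_C_left lipschitz_on_continuous_on by metis

lemma M_C_right_bounds:
  assumes "cball w r \<subseteq> C" "0 < r" and a: "a = norm (w' - w) / r" "a < 1"
  shows "M_C C v w / (1 + a) \<le> M_C C v w'" and "M_C C v w' \<le> M_C C v w / (1 - a)"
proof -
  have w: "w \<in> C" using assms by auto
  have lower: "w' - (1 - a) *\<^sub>R w \<in> closure C"
    using dominated_by_interior_point[OF assms(1,2), of "w - w'"] a(1)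
    by (simp add: norm_minus_commute algebra_simps)
  have upper: "(1 + a) *\<^sub>R w - w' \<in> closure C"
    using dominated_by_interior_point[OF assms(1,2), of "w' - w"] a(1)
    by (simp add: algebra_simps)
  have a0: "0 \<le> a" using a(1) assms(2) by simp
  have w1: "(1 - a) *\<^sub>R w \<in> C" using w a(2) by (intro scaleR_in_C) auto
  have w': "w' \<in> C" using add_closure_in_C[OF w1 lower] by simp
  have "M_C C v ((1 + a) *\<^sub>R w) \<le> M_C C v w'"
    using M_C_antimono_right[OF w' upper] .
  thus "M_C C v w / (1 + a) \<le> M_C C v w'"
    using M_C_scaleR_right[OF w, of "1 + a"] a0 by simp
  have "M_C C v w' \<le> M_C C v ((1 - a) *\<^sub>R w)"
    using M_C_antimono_right[OF w1 lower] .
  thus "M_C C v w' \<le> M_C C v w / (1 - a)"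
    using M_C_scaleR_right[OF w, of "1 - a"] a(2) by simp
qed

lemma continuous_on_M_C_right: "continuous_on C (\<lambda>w. M_C C v w)"
  unfolding continuous_on_def
proof
  fix w assume "w \<in> C"
  then obtain r where r: "0 < r" "cball w r \<subseteq> C"
    using open_C open_contains_cball by blast
  define a where "a w' = norm (w' - w) / r" for w'
  have a: "(a \<longlongrightarrow> 0) (at w within C)"
    unfolding a_def using r(1)
    by (intro tendsto_eq_intros tendsto_diff[OF tendsto_ident_at tendsto_const]) auto
  have near: "\<forall>\<^sub>F w' in at w within C. a w' < 1"
    using order_tendstoD(2)[OF a] by simp
  have "\<forall>\<^sub>F w' in at w within C. M_C C v w / (1 + a w') \<le> M_C C v w'"
    using near by eventually_elim (rule M_C_right_bounds(1)[OF r(2,1) a_def])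
  moreover have "\<forall>\<^sub>F w' in at w within C. M_C C v w' \<le> M_C C v w / (1 - a w')"
    using near by eventually_elim (rule M_C_right_bounds(2)[OF r(2,1) a_def])
  moreover have "((\<lambda>w'. M_C C v w / (1 + a w')) \<longlongrightarrow> M_C C v w) (at w within C)"
    and "((\<lambda>w'. M_C C v w / (1 - a w')) \<longlongrightarrow> M_C C v w) (at w within C)"
    by (auto intro!: tendsto_eq_intros a)
  ultimately show "((\<lambda>w. M_C C v w) \<longlongrightarrow> M_C C v w) (at w within C)"
    by (rule tendsto_sandwich)
qed

lemma M_C_tendsto_at_top_at_frontier:
  assumes x: "x \<in> frontier C" and ws: "\<And>n. ws n \<in> C" "ws \<longlonglongrightarrow> x" and z: "z \<in> C"
  shows "filterlim (\<lambda>n. M_C C z (ws n)) at_top sequentially"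
  unfolding filterlim_at_top_gt[where c=0]
proof (intro allI impI)
  fix T :: real assume T: "0 < T"
  let ?U = "- ((\<lambda>w. T *\<^sub>R w - z) -` closure C)"
  have "closed ((\<lambda>w. T *\<^sub>R w - z) -` closure C)"
    by (intro continuous_closed_vimage continuous_intros) auto
  hence "open ?U" by auto
  moreover have "x \<in> ?U"
  proof
    assume "x \<in> (\<lambda>w. T *\<^sub>R w - z) -` closure C"
    hence "z + (T *\<^sub>R x - z) \<in> C" using z by (intro add_closure_in_C) auto
    hence "x \<in> C" using scaleR_in_C[of "1 / T" "T *\<^sub>R x"] T by simp
    thus False using x by (simp add: frontier_C)
  qed
  ultimately have "\<forall>\<^sub>F n in sequentially. ws n \<in> ?U"
    by (rule topological_tendstoD[OF ws(2)])
  thus "\<forall>\<^sub>F n in sequentially. T \<le> M_C C z (ws n)"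
    by eventually_elim (use ws(1) T M_C_le_iff[of _ T z] in force)
qed

lemma M_C_le_near:
  assumes w: "w \<in> C" and z: "cball z r \<subseteq> C" "0 < r"
  shows "M_C C x w \<le> 1 + norm (x - w) / r * M_C C z w"
proof -
  define d where "d = norm (x - w) / r"
  have d: "0 \<le> d" using z(2) by (simp add: d_def)
  have "M_C C x w \<le> M_C C w w + M_C C (x - w) w"
    using M_C_add_le[OF w, of w "x - w"] by simp
  also have "M_C C (x - w) w \<le> M_C C (d *\<^sub>R z) w"
    using dominated_by_interior_point[OF z] w by (intro M_C_mono) (auto simp: d_def)
  also have "M_C C (d *\<^sub>R z) w \<le> d * M_C C z w"
    using M_C_scaleR_left_le[OF w d] .
  finally show ?thesis using M_C_le_self[OF w] by (simp add: d_def)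
qed

end

locale proper_funk_geometry = funk_geometry +
  assumes no_lines: "contains_no_lines C"
begin

lemma M_C_pos:
  assumes "w \<in> C" "v \<in> closure C" "v \<noteq> 0"
  shows "0 < M_C C v w"
proof (rule ccontr)
  assume "\<not> 0 < M_C C v w"
  hence "M_C C v w = 0" using M_C_nonneg[OF assms(1), of v] by simp
  hence "- v \<in> closure C" using M_C_attained[OF assms(1), of v] by simp
  thus False using assms(2,3) no_lines by (auto simp: contains_no_lines_def)
qed

lemma M_C_pos_interior: "z \<in> C \<Longrightarrow> w \<in> C \<Longrightarrow> 0 < M_C C z w"
  using M_C_pos closure_subset zero_notin_C by blast

lemma continuous_on_F_C_left:
  "w \<in> C \<Longrightarrow> continuous_on (closure C - {0}) (\<lambda>v. F_C C v w)"
  unfolding F_C_def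
  by (intro continuous_on_ln continuous_on_subset[OF continuous_on_M_C_left])
    (auto dest: M_C_pos[rotated])

lemma continuous_on_F_C_right:
  "v \<in> closure C - {0} \<Longrightarrow> continuous_on C (F_C C v)"
  unfolding F_C_def
  by (intro continuous_on_ln continuous_on_M_C_right) (auto dest: M_C_pos)

lemma continuous_on_H_C_right: "z \<in> C \<Longrightarrow> continuous_on C (H_C C z)"
  unfolding H_C_def using closure_subset zero_notin_C
  by (intro continuous_on_add continuous_on_F_C_right
      continuous_on_subset[OF continuous_on_F_C_left]) auto

lemma H_C_scaleR_right:
  assumes "z \<in> C" "w \<in> C" "0 < t"
  shows "H_C C z (t *\<^sub>R w) = H_C C z w"
  using assms M_C_pos_interior[of z w] M_C_pos_interior[of w z]
  by (simp add: H_C_def F_C_def M_C_scaleR_right M_C_scaleR_left ln_div ln_mult)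

lemma r_C_eq: "r_C C b p z = F_C C p z - F_C C p b"
  by (simp add: r_C_def RF_C_def)

lemma r_C_scaleR:
  assumes "x \<in> closure C - {0}" "b \<in> C" "z \<in> C" "0 < t"
  shows "r_C C b (t *\<^sub>R x) z = r_C C b x z"
  using assms M_C_pos[of z x] M_C_pos[of b x]
  by (simp add: r_C_eq F_C_def M_C_scaleR_left ln_mult)

lemma funk_limit_at_base:
  assumes "d_converges (F_C C) C b ws q" "b \<in> C"
  shows "q b = 0"
  using assms by (auto simp: d_converges_def LIMSEQ_const_iff)

lemma funk_limit_mono:
  assumes q: "d_converges (F_C C) C b ws q" and z: "z \<in> C" "z' - z \<in> closure C"
  shows "q z \<le> q z'"
proof -
  have z': "z' \<in> C" using add_closure_in_C[OF z] by simp
  have wsC: "ws n \<in> C" for n using q by (simp add: d_converges_def)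
  have "F_C C z (ws n) \<le> F_C C z' (ws n)" for n
    using M_C_mono[OF wsC z(2)] M_C_pos_interior[OF z(1) wsC] M_C_pos_interior[OF z' wsC]
    by (simp add: F_C_def)
  moreover have lim: "(\<lambda>n. F_C C u (ws n) - F_C C b (ws n)) \<longlonglongrightarrow> q u" if "u \<in> C" for u
    using q that by (simp add: d_converges_def)
  ultimately show ?thesis
    by (intro LIMSEQ_le[OF lim[OF z(1)] lim[OF z']]) auto
qed

lemma F_C_translate_le:
  assumes w: "w \<in> C" and z: "cball z r \<subseteq> C" "0 < r" and x: "x \<in> closure C" and s: "0 \<le> s"
  shows "F_C C (z + s *\<^sub>R x) w - F_C C z w \<le> ln (1 + s / M_C C z w + s * (norm (x - w) / r))"
proof -
  define m where "m = M_C C z w"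
  define e where "e = 1 + s / m + s * (norm (x - w) / r)"
  have zC: "z \<in> C" using z by auto
  have z': "z + s *\<^sub>R x \<in> C"
    using x s by (intro add_closure_in_C[OF zC] scaleR_in_closure_C)
  have m: "0 < m" using M_C_pos_interior[OF zC w] by (simp add: m_def)
  have e: "0 < e" using m s z(2) unfolding e_def by (intro add_pos_nonneg) auto
  have "M_C C (z + s *\<^sub>R x) w \<le> m + M_C C (s *\<^sub>R x) w"
    using M_C_add_le[OF w] by (simp add: m_def)
  also have "\<dots> \<le> m + s * (1 + norm (x - w) / r * m)"
    using order_trans[OF M_C_scaleR_left_le[OF w s] mult_left_mono[OF M_C_le_near[OF w z] s]]
    by (simp add: m_def)
  also have "\<dots> = m * e"
    using m by (simp add: e_def field_simps)
  finally have "ln (M_C C (z + s *\<^sub>R x) w) \<le> ln (m * e)"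
    using m e M_C_pos_interior[OF z' w] by simp
  thus ?thesis using m e by (simp add: F_C_def ln_mult m_def e_def)
qed

lemma funk_limit_translation_invariant:
  assumes x: "x \<in> frontier C" and ws: "ws \<longlonglongrightarrow> x" and q: "d_converges (F_C C) C b ws q"
    and z: "z \<in> C" and s: "0 \<le> s"
  shows "q (z + s *\<^sub>R x) \<le> q z"
proof -
  obtain r where r: "0 < r" "cball z r \<subseteq> C" using z open_C open_contains_cball by blast
  have wsC: "ws n \<in> C" for n using q by (simp add: d_converges_def)
  have xK: "x \<in> closure C" using x by (simp add: frontier_C)
  have z': "z + s *\<^sub>R x \<in> C"
    using xK s by (intro add_closure_in_C[OF z] scaleR_in_closure_C)
  define g where "g n = ln (1 + s / M_C C z (ws n) + s * (norm (x - ws n) / r))" for n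
  \<comment> \<open>The error term vanishes because M(z/w) \<rightarrow> \<infinity> as w approaches the frontier.\<close>
  have "(\<lambda>n. x - ws n) \<longlonglongrightarrow> 0"
    using tendsto_diff[OF tendsto_const ws, of x] by simp
  hence "g \<longlonglongrightarrow> ln (1 + 0 + s * (0 / r))"
    unfolding g_def using M_C_tendsto_at_top_at_frontier[OF x wsC ws z] r(1)
    by (intro tendsto_intros tendsto_divide_0[OF tendsto_const] filterlim_at_top_imp_at_infinity
        tendsto_norm_zero) simp_all
  moreover have "(\<lambda>n. (F_C C (z + s *\<^sub>R x) (ws n) - F_C C b (ws n)) - (F_C C z (ws n) - F_C C b (ws n)))
      \<longlonglongrightarrow> q (z + s *\<^sub>R x) - q z"
    using q z z' by (intro tendsto_diff) (auto simp: d_converges_def)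
  ultimately have "q (z + s *\<^sub>R x) - q z \<le> 0"
    using F_C_translate_le[OF wsC r(2,1) xK s] by (intro LIMSEQ_le) (auto simp: g_def)
  thus ?thesis by simp
qed

lemma funk_limit_at_frontier_in_A_C:
  assumes b: "b \<in> C" and x: "x \<in> frontier C - {0}" and ws: "ws \<longlonglongrightarrow> x"
    and q: "d_converges (F_C C) C b ws q"
  shows "q \<in> A_C C b x"
  unfolding A_C_def horofunction_def
proof (intro CollectI conjI exI)
  have xK: "x \<in> closure C" "x \<noteq> 0" using x by (auto simp: frontier_C)
  show "\<not> (\<exists>p\<in>C. \<forall>z\<in>C. q z = F_C C z p - F_C C b p)"
  proof
    assume "\<exists>p\<in>C. \<forall>z\<in>C. q z = F_C C z p - F_C C b p"
    then obtain p where p: "p \<in> C" and qp: "\<And>z. z \<in> C \<Longrightarrow> q z = F_C C z p - F_C C b p"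
      by blast
    have Mx: "0 < M_C C x p" using M_C_pos[OF p xK] .
    have Mb: "0 < M_C C b p" using M_C_pos_interior[OF b p] .
    define s where "s = 2 * M_C C b p / M_C C x p"
    have s: "0 < s" using Mx Mb by (simp add: s_def)
    have bs: "b + s *\<^sub>R x \<in> C"
      using s xK by (intro add_closure_in_C[OF b] scaleR_in_closure_C) auto
    have "M_C C b p < s * M_C C x p"
      using Mx Mb by (simp add: s_def)
    also have "\<dots> = M_C C (s *\<^sub>R x) p"
      using M_C_scaleR_left[OF p s] by simp
    also have "\<dots> \<le> M_C C (b + s *\<^sub>R x) p"
      using b closure_subset by (intro M_C_mono[OF p]) auto
    finally have "F_C C b p < F_C C (b + s *\<^sub>R x) p"
      using Mb by (simp add: F_C_def)
    moreover have "q (b + s *\<^sub>R x) \<le> q b"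
      using x ws q b s by (intro funk_limit_translation_invariant) auto
    ultimately show False using qp[OF bs] qp[OF b] by simp
  qed
qed (use q ws in auto)

lemma H_C_limit_at_interior:
  assumes b: "b \<in> C" and vs: "\<And>n. vs n \<in> C" "vs \<longlonglongrightarrow> y" and y: "y \<in> C"
    and h: "\<And>z. z \<in> C \<Longrightarrow> (\<lambda>n. H_C C z (vs n) - H_C C b (vs n)) \<longlonglongrightarrow> h z"
    and z: "z \<in> C"
  shows "h z = H_C C z y - H_C C b y"
proof -
  have "(\<lambda>n. H_C C z' (vs n)) \<longlonglongrightarrow> H_C C z' y" if "z' \<in> C" for z'
    using continuous_on_tendsto_compose[OF continuous_on_H_C_right[OF that] vs(2) y] by (simp add: vs(1))
  hence "(\<lambda>n. H_C C z (vs n) - H_C C b (vs n)) \<longlonglongrightarrow> H_C C z y - H_C C b y"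
    using b z by (intro tendsto_diff)
  thus ?thesis using h[OF z] LIMSEQ_unique by blast
qed

lemma hilbert_horofunction_frontier_sequence:
  assumes b: "b \<in> C" and h: "horofunction (H_C C) C b h"
  obtains y vs where "y \<in> frontier C - {0}" "\<And>n. vs n \<in> C" "vs \<longlonglongrightarrow> y"
    "\<And>z. z \<in> C \<Longrightarrow> (\<lambda>n. H_C C z (vs n) - H_C C b (vs n)) \<longlonglongrightarrow> h z"
proof -
  from h obtain xs where xs: "\<And>n. xs n \<in> C"
    and xs_lim: "\<And>z. z \<in> C \<Longrightarrow> (\<lambda>n. H_C C z (xs n) - H_C C b (xs n)) \<longlonglongrightarrow> h z"
    and not_internal: "\<not> (\<exists>p\<in>C. \<forall>z\<in>C. h z = H_C C z p - H_C C b p)"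
    unfolding horofunction_def d_converges_def by blast
  define u where "u n = (1 / norm (xs n)) *\<^sub>R xs n" for n
  have xs0: "xs n \<noteq> 0" for n using xs zero_notin_C by metis
  have u: "u n \<in> C" for n using scaleR_in_C xs xs0 by (simp add: u_def)
  have "H_C C z (u n) = H_C C z (xs n)" if "z \<in> C" for z n
    using H_C_scaleR_right[OF that xs] xs0 by (simp add: u_def)
  hence u_lim: "(\<lambda>n. H_C C z (u n) - H_C C b (u n)) \<longlonglongrightarrow> h z" if "z \<in> C" for z
    using xs_lim[OF that] that b by simp
  have "u n \<in> sphere 0 1 \<inter> closure C" for n
    using u xs0 closure_subset by (auto simp: u_def)
  moreover have "compact (sphere (0::'a) 1 \<inter> closure C)"
    by (intro compact_Int_closed compact_sphere) simp
  ultimately obtain y \<phi> where y: "y \<in> sphere 0 1 \<inter> closure C" and \<phi>: "strict_mono \<phi>"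
    and lim: "(u \<circ> \<phi>) \<longlonglongrightarrow> y"
    using compact_imp_seq_compact unfolding seq_compact_def by metis
  have sub_lim: "(\<lambda>n. H_C C z ((u \<circ> \<phi>) n) - H_C C b ((u \<circ> \<phi>) n)) \<longlonglongrightarrow> h z" if "z \<in> C" for z
    using LIMSEQ_subseq_LIMSEQ[OF u_lim[OF that] \<phi>] by (simp add: o_def)
  have "y \<notin> C"
    using H_C_limit_at_interior[OF b _ lim _ sub_lim] u not_internal by auto
  with y have "y \<in> frontier C - {0}" by (auto simp: frontier_C)
  from that[OF this _ lim sub_lim] u show ?thesis by simp
qed

lemma hilbert_horofunction_decomposition:
  assumes b: "b \<in> C" and h: "horofunction (H_C C) C b h"
  shows "\<exists>x \<in> frontier C - {0}. \<exists>q \<in> A_C C b x. \<forall>z\<in>C. h z = r_C C b x z + q z"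
proof -
  obtain y vs where y: "y \<in> frontier C - {0}" and vs: "\<And>n. vs n \<in> C" "vs \<longlonglongrightarrow> y"
    and H_lim: "\<And>z. z \<in> C \<Longrightarrow> (\<lambda>n. H_C C z (vs n) - H_C C b (vs n)) \<longlonglongrightarrow> h z"
    using hilbert_horofunction_frontier_sequence[OF b h] by blast
  have yK: "y \<in> closure C - {0}" using y by (auto simp: frontier_C)
  have vsK: "vs n \<in> closure C" "vs n \<noteq> 0" for n
    using vs(1)[of n] closure_subset zero_notin_C by auto
  have F_left_lim: "(\<lambda>n. F_C C (vs n) z) \<longlonglongrightarrow> F_C C y z" if "z \<in> C" for z
    using continuous_on_tendsto_compose[OF continuous_on_F_C_left[OF that] vs(2) yK]
    by (simp add: vsK)
  define q where "q z = h z - r_C C b y z" for z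
  have "(\<lambda>n. (H_C C z (vs n) - H_C C b (vs n)) - (F_C C (vs n) z - F_C C (vs n) b))
      \<longlonglongrightarrow> h z - (F_C C y z - F_C C y b)" if "z \<in> C" for z
    using that b by (intro tendsto_diff H_lim F_left_lim)
  hence "d_converges (F_C C) C b vs q"
    using vs by (simp add: d_converges_def H_C_def q_def r_C_eq)
  hence "q \<in> A_C C b y"
    using funk_limit_at_frontier_in_A_C[OF b y vs(2)] by blast
  moreover have "\<forall>z\<in>C. h z = r_C C b y z + q z" by (simp add: q_def)
  ultimately show ?thesis using y by blast
qed

lemma decomposition_gauge_bound:
  assumes b: "b \<in> C" and x: "x \<in> frontier C - {0}" and wx: "wx \<longlonglongrightarrow> x"
    and qx: "d_converges (F_C C) C b wx qx" and y: "y \<in> closure C - {0}"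
    and qy: "d_converges (F_C C) C b wy qy"
    and eq: "\<forall>z\<in>C. r_C C b x z + qx z = r_C C b y z + qy z" and t: "0 < t"
  shows "M_C C y (b + t *\<^sub>R x) \<le> M_C C y b / (M_C C x b * t)"
proof -
  have xK: "x \<in> closure C" "x \<noteq> 0" using x by (auto simp: frontier_C)
  have yK: "y \<in> closure C" "y \<noteq> 0" using y by auto
  note Mxb = M_C_pos[OF b xK] and Myb = M_C_pos[OF b yK]
  define w where "w = b + t *\<^sub>R x"
  have tx: "t *\<^sub>R x \<in> closure C" using t xK by (intro scaleR_in_closure_C) auto
  have w: "w \<in> C" using add_closure_in_C[OF b tx] by (simp add: w_def)
  have "(1 / t) *\<^sub>R w - x = (1 / t) *\<^sub>R b"
    using t by (simp add: w_def scaleR_add_right)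
  moreover have "(1 / t) *\<^sub>R b \<in> closure C"
    using closure_subset scaleR_in_C[OF _ b, of "1 / t"] t by auto
  ultimately have "(1 / t) *\<^sub>R w - x \<in> closure C" by simp
  hence "M_C C x w \<le> 1 / t" using w t by (simp add: M_C_le_iff)
  hence Fxw: "F_C C x w \<le> ln (1 / t)" using M_C_pos[OF w xK] t by (simp add: F_C_def)
  have "qx w \<le> qx b"
    using funk_limit_translation_invariant[of x wx b qx b t] x wx qx b t by (simp add: w_def)
  moreover have "qy b \<le> qy w"
    using funk_limit_mono[OF qy b] tx by (simp add: w_def)
  ultimately have "F_C C y w \<le> F_C C x w - F_C C x b + F_C C y b"
    using eq w funk_limit_at_base[OF qx b] funk_limit_at_base[OF qy b] by (auto simp: r_C_eq)
  also have "\<dots> \<le> ln (M_C C y b / (M_C C x b * t))"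
    using Fxw t Mxb Myb by (simp add: F_C_def ln_div ln_mult)
  finally show ?thesis
    using M_C_pos[OF w yK] Mxb Myb t by (simp add: F_C_def w_def)
qed

lemma decomposition_direction:
  assumes b: "b \<in> C" and x: "x \<in> frontier C - {0}" and wx: "wx \<longlonglongrightarrow> x"
    and qx: "d_converges (F_C C) C b wx qx" and y: "y \<in> closure C - {0}"
    and qy: "d_converges (F_C C) C b wy qy"
    and eq: "\<forall>z\<in>C. r_C C b x z + qx z = r_C C b y z + qy z"
  shows "M_C C y b *\<^sub>R x - M_C C x b *\<^sub>R y \<in> closure C"
proof -
  have xK: "x \<in> closure C" "x \<noteq> 0" using x by (auto simp: frontier_C)
  have Mx: "0 < M_C C x b" using M_C_pos[OF b xK] .
  define e where "e = M_C C y b / M_C C x b"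
  have "(e / t) *\<^sub>R b + (e *\<^sub>R x - y) \<in> closure C" if t: "0 < t" for t
  proof -
    have w: "b + t *\<^sub>R x \<in> C"
      using t xK by (intro add_closure_in_C[OF b] scaleR_in_closure_C) auto
    have "M_C C y (b + t *\<^sub>R x) \<le> e / t"
      using decomposition_gauge_bound[OF b x wx qx y qy eq t] by (simp add: e_def)
    hence "(e / t) *\<^sub>R (b + t *\<^sub>R x) - y \<in> closure C"
      using w t Mx M_C_nonneg[OF b, of y] by (simp add: M_C_le_iff e_def)
    thus ?thesis using t by (simp add: scaleR_add_right add_diff_eq)
  qed
  hence "\<forall>\<^sub>F t in at_top. (e / t) *\<^sub>R b + (e *\<^sub>R x - y) \<in> closure C"
    using eventually_gt_at_top[of 0] by (rule eventually_mono[rotated]) blast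
  moreover have "((\<lambda>t. (e / t) *\<^sub>R b + (e *\<^sub>R x - y)) \<longlongrightarrow> 0 *\<^sub>R b + (e *\<^sub>R x - y)) at_top"
    by (intro tendsto_intros tendsto_divide_0[OF tendsto_const]
        filterlim_at_top_imp_at_infinity filterlim_ident)
  ultimately have "e *\<^sub>R x - y \<in> closure C"
    using Lim_in_closed_set[OF closed_closure] by fastforce
  hence "M_C C x b *\<^sub>R (e *\<^sub>R x - y) \<in> closure C"
    using Mx by (intro scaleR_in_closure_C) auto
  thus ?thesis using Mx by (simp add: e_def scaleR_diff_right)
qed

lemma decomposition_unique_direction:
  assumes b: "b \<in> C" and x: "x \<in> frontier C - {0}" and y: "y \<in> frontier C - {0}"
    and qx: "qx \<in> A_C C b x" and qy: "qy \<in> A_C C b y"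
    and eq: "\<forall>z\<in>C. r_C C b x z + qx z = r_C C b y z + qy z"
  shows "\<exists>t>0. y = t *\<^sub>R x"
proof -
  obtain wx where wx: "wx \<longlonglongrightarrow> x" "d_converges (F_C C) C b wx qx"
    using qx by (auto simp: A_C_def)
  obtain wy where wy: "wy \<longlonglongrightarrow> y" "d_converges (F_C C) C b wy qy"
    using qy by (auto simp: A_C_def)
  have xK: "x \<in> closure C - {0}" and yK: "y \<in> closure C - {0}"
    using x y by (auto simp: frontier_C)
  define u where "u = M_C C y b *\<^sub>R x - M_C C x b *\<^sub>R y"
  have "u \<in> closure C"
    using decomposition_direction[OF b x wx yK wy(2) eq] by (simp add: u_def)
  moreover have "- u \<in> closure C"
    using decomposition_direction[OF b y wy xK wx(2)] eq by (simp add: u_def)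
  ultimately have "u = 0" using no_lines unfolding contains_no_lines_def by blast
  hence "M_C C x b *\<^sub>R y = M_C C y b *\<^sub>R x" by (simp add: u_def)
  hence "(1 / M_C C x b) *\<^sub>R (M_C C x b *\<^sub>R y) = (M_C C y b / M_C C x b) *\<^sub>R x" by simp
  moreover have "0 < M_C C x b" "0 < M_C C y b" using M_C_pos b xK yK by auto
  ultimately show ?thesis
    by (intro exI[of _ "M_C C y b / M_C C x b"]) auto
qed

end

theorem mainTheorem10:
  fixes C :: "'a::euclidean_space set" and b :: 'a and h :: "'a \<Rightarrow> real"
  assumes "open_cone C" and "contains_no_lines C" and "b \<in> C"
    and "horofunction (H_C C) C b h"
  shows "(\<exists>x \<in> frontier C - {0}. \<exists>q \<in> A_C C b x. \<forall>z\<in>C. h z = r_C C b x z + q z)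
    \<and> (\<forall>x y qx qy. x \<in> frontier C - {0} \<longrightarrow> y \<in> frontier C - {0} \<longrightarrow>
          qx \<in> A_C C b x \<longrightarrow> qy \<in> A_C C b y \<longrightarrow>
          (\<forall>z\<in>C. h z = r_C C b x z + qx z) \<longrightarrow> (\<forall>z\<in>C. h z = r_C C b y z + qy z) \<longrightarrow>
          (\<exists>t>0. y = t *\<^sub>R x) \<and> (\<forall>z\<in>C. r_C C b x z = r_C C b y z) \<and> (\<forall>z\<in>C. qx z = qy z))"
proof -
  interpret proper_funk_geometry C
    using assms(1,2) by unfold_locales
  have uniqueness: "(\<exists>t>0. y = t *\<^sub>R x) \<and> (\<forall>z\<in>C. r_C C b x z = r_C C b y z) \<and> (\<forall>z\<in>C. qx z = qy z)"
    if x: "x \<in> frontier C - {0}" and y: "y \<in> frontier C - {0}"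
      and qx: "qx \<in> A_C C b x" and qy: "qy \<in> A_C C b y"
      and hx: "\<forall>z\<in>C. h z = r_C C b x z + qx z" and hy: "\<forall>z\<in>C. h z = r_C C b y z + qy z"
    for x y qx qy
  proof -
    have "\<forall>z\<in>C. r_C C b x z + qx z = r_C C b y z + qy z" using hx hy by simp
    then obtain t where t: "0 < t" "y = t *\<^sub>R x"
      using decomposition_unique_direction[OF assms(3) x y qx qy] by blast
    hence "\<forall>z\<in>C. r_C C b x z = r_C C b y z"
      using r_C_scaleR x assms(3) by (auto simp: frontier_C)
    thus ?thesis using t hx hy by auto
  qed
  show ?thesis
    using hilbert_horofunction_decomposition[OF assms(3,4)] uniqueness by blast
qed

end
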